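(* Assume $\Delta=0$ and $2\mid pqr$. Let $\lambda_1,\lambda_2,\lambda_3\in K$ with $\lambda_ic_i\in N$, and let $s_i':=s_i\nu_i$, where $\nu_i\in N$ corresponds to $\lambda_ic_i$. Consider the relation $$(\mathcal{E})\qquad (4-\gamma)\lambda_1+(l+2)\lambda_2+(m+2)\lambda_3=-1.$$ (a) If $r=2r_1$, then $\big(s_1'(s_2's_3')^{r_1}\big)^2=1$ if and only if $(\mathcal{E})$ holds. If $q=2q_1$, then $\big(s_2'(s_3's_1')^{q_1}\big)^2=1$ if and only if $(\mathcal{E})$ holds. If $p=2p_1$, then $\big(s_3'(s_1's_2')^{p_1}\big)^2=1$ if and only if $(\mathcal{E})$ holds. (b) Consequently, if the exact sequence $1\to N\to G\to G/N\to 1$ splits (i.e. there is a homomorphism $\tau:G/N\to G$ with $\pi\circ\tau=\mathrm{id}$, $\pi:G\to G/N$ the projection), then there exist $\lambda_1,\lambda_2,\lambda_3\in K$ with $\lambda_ic_i\in N$ satisfying $(\mathcal{E})$ (namely those with $\tau(\pi(s_i))=s_i\nu_i$).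
   Context: Setting. Let $p,q,r\ge 3$ be integers and $W=W(p,q,r)$ the Coxeter group with generators $s_1,s_2,s_3$ and relations $s_i^2=1$, $(s_1s_2)^p=(s_1s_3)^q=(s_2s_3)^r=1$. Let $\alpha=4\cos^2(\pi k_1/p)$, $\beta=4\cos^2(\pi k_2/q)$, $\gamma=4\cos^2(\pi k_3/r)$ with $\gcd(k_1,p)=\gcd(k_2,q)=\gcd(k_3,r)=1$ (so $0<\alpha,\beta,\gamma<4$), and let $l,m\in\mathbb{C}$ with $lm=\gamma$. Let $K\subset\mathbb{C}$ be a field containing $\alpha,\beta,\gamma,l,m$, and $M$ a $3$-dimensional $K$-vector space with basis $(a_1,a_2,a_3)$. The reflection representation $R:W\to GL(M)$ with parameters $(\alpha,\beta,\gamma;l,m)$ is defined by: for $x=\lambda_1a_1+\lambda_2a_2+\lambda_3a_3$, $R(s_1)x=x-(2\lambda_1-\alpha\lambda_2-\beta\lambda_3)a_1$, $R(s_2)x=x-(-\lambda_1+2\lambda_2-l\lambda_3)a_2$, $R(s_3)x=x-(-\lambda_1-m\lambda_2+2\lambda_3)a_3$. Put $G=R(W)$ and write $s_i$ for $R(s_i)$. Let $\Delta=8-2\alpha-2\beta-2\gamma-(\alpha l+\beta m)$; $R$ is reducible iff $\Delta=0$. Reducible setting. Assume $\Delta=0$. Put $b=(4-\gamma)a_1+(l+2)a_2+(m+2)a_3$; then the space of $G$-fixed vectors is $C_M(G)=Kb$ and $(b,a_2,a_3)$ is a basis of $M$. Let $N=N(G)$ be the subgroup of elements of $G$ acting trivially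 on $M/C_M(G)$. Each $\zeta\in N$ satisfies $\zeta(b)=b$, $\zeta(a_2)=a_2+\lambda b$, $\zeta(a_3)=a_3+\mu b$ for a unique $(\lambda,\mu)\in K^2$; the map $\zeta\mapsto(\lambda,\mu)$ is an injective group homomorphism $N\to (K^2,+)$, through which $N$ is identified with an additive subgroup of $K^2$ (and written additively). Put $c_1=(\alpha,\beta)$, $c_2=(-2,l)$, $c_3=(m,-2)\in K^2$. *)

theory Defs
  imports "HOL-Analysis.Analysis" "HOL-Algebra.Coset"
begin

(* M = complex^3 with basis a_i = e i 1 (the field K is taken to be \<complex>) *)
definition e :: "3 \<Rightarrow> complex \<Rightarrow> complex^3" where
  "e i c = (\<chi> j. if j = i then c else 0)"

definition rs1 :: "complex \<Rightarrow> complex \<Rightarrow> complex^3 \<Rightarrow> complex^3" where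
  "rs1 \<alpha> \<beta> x = x - e 1 (2 * x$1 - \<alpha> * x$2 - \<beta> * x$3)"
definition rs2 :: "complex \<Rightarrow> complex^3 \<Rightarrow> complex^3" where
  "rs2 l x = x - e 2 (- x$1 + 2 * x$2 - l * x$3)"
definition rs3 :: "complex \<Rightarrow> complex^3 \<Rightarrow> complex^3" where
  "rs3 m x = x - e 3 (- x$1 - m * x$2 + 2 * x$3)"

(* G = R(W): the group generated by the three reflections (they are involutions,
   so the generated monoid is the generated group) *)
inductive_set Ggrp :: "complex \<Rightarrow> complex \<Rightarrow> complex \<Rightarrow> complex \<Rightarrow> (complex^3 \<Rightarrow> complex^3) set"
  for \<alpha> \<beta> l m where
  one: "id \<in> Ggrp \<alpha> \<beta> l m"
| mul1: "g \<in> Ggrp \<alpha> \<beta> l m \<Longrightarrow> g \<circ> rs1 \<alpha> \<beta> \<in> Ggrp \<alpha> \<beta> l m"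
| mul2: "g \<in> Ggrp \<alpha> \<beta> l m \<Longrightarrow> g \<circ> rs2 l \<in> Ggrp \<alpha> \<beta> l m"
| mul3: "g \<in> Ggrp \<alpha> \<beta> l m \<Longrightarrow> g \<circ> rs3 m \<in> Ggrp \<alpha> \<beta> l m"

definition Gstruct :: "(complex^3 \<Rightarrow> complex^3) set \<Rightarrow> (complex^3 \<Rightarrow> complex^3) monoid" where
  "Gstruct G = \<lparr>carrier = G, monoid.mult = (\<circ>), one = id\<rparr>"

definition fixed_vecs :: "(complex^3 \<Rightarrow> complex^3) set \<Rightarrow> (complex^3) set" where
  "fixed_vecs G = {x. \<forall>g\<in>G. g x = x}"

(* N(G): elements acting trivially on M / C_M(G) *)
definition Nsub :: "(complex^3 \<Rightarrow> complex^3) set \<Rightarrow> (complex^3 \<Rightarrow> complex^3) set" where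
  "Nsub G = {z \<in> G. \<forall>x. z x - x \<in> fixed_vecs G}"

definition corresp :: "complex^3 \<Rightarrow> (complex^3 \<Rightarrow> complex^3) \<Rightarrow> complex \<times> complex \<Rightarrow> bool" where
  "corresp b z v \<longleftrightarrow> z b = b \<and> z (e 2 1) = e 2 1 + fst v *s b \<and> z (e 3 1) = e 3 1 + snd v *s b"

definition psc :: "complex \<Rightarrow> complex \<times> complex \<Rightarrow> complex \<times> complex" where
  "psc t v = (t * fst v, t * snd v)"

end

theory Submission
  imports Defs
begin

text \<open>
  Write \<open>s\<^sub>i x = x - f\<^sub>i x \<cdot> a\<^sub>i\<close> with the coroots \<open>f\<^sub>i\<close> (the rows of the Cartan matrix).
  Since \<open>\<Delta> = 0\<close> they are linearly dependent and all vanish on \<open>b\<close>, and the element of \<open>N\<close>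
  corresponding to \<open>\<lambda> c\<^sub>i\<close> is the transvection \<open>x \<mapsto> x - \<lambda> f\<^sub>i x \<cdot> b\<close>. Hence
  \<open>s\<^sub>i' = s\<^sub>i \<nu>\<^sub>i\<close> is the reflection with coroot \<open>f\<^sub>i\<close> and root \<open>a\<^sub>i + \<lambda>\<^sub>i b\<close>, and these
  roots satisfy \<open>(4 - \<gamma>)(a\<^sub>1 + \<lambda>\<^sub>1 b) + (l + 2)(a\<^sub>2 + \<lambda>\<^sub>2 b) + (m + 2)(a\<^sub>3 + \<lambda>\<^sub>3 b) = (1 + S) b\<close>,
  where \<open>S\<close> is the left-hand side of (E).

  If \<open>r = 2 r\<^sub>1\<close>, then \<open>\<gamma> = 2 + \<omega> + 1/\<omega>\<close> for a primitive \<open>r\<close>-th root of unity \<open>\<omega>\<close>. So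
  \<open>s\<^sub>2' s\<^sub>3'\<close> has eigenvalues \<open>\<omega>\<close>, \<open>1/\<omega>\<close> on the plane of its two roots, and its \<open>r\<^sub>1\<close>-th
  power is \<open>-1\<close> there and the identity on \<open>ker f\<^sub>2 \<inter> ker f\<^sub>3\<close>, which lies in \<open>ker f\<^sub>1\<close>.
  A direct computation then gives \<open>(s\<^sub>1' (s\<^sub>2' s\<^sub>3')^r\<^sub>1)^2 x = x + 2 (1 + S) / (4 - \<gamma>) \<cdot> f\<^sub>1 x \<cdot> b\<close>,
  which is the identity iff (E) holds; the cases of \<open>q\<close> and \<open>p\<close> are cyclic shifts of this one.

  For (b), the same word in the \<open>s\<^sub>i\<close> themselves (all \<open>\<lambda>\<^sub>i = 0\<close>) lies in \<open>N\<close>, so the splitting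
  \<open>\<tau>\<close> maps its class to \<open>1\<close>. Moreover \<open>\<tau>(\<pi> s\<^sub>i) = s\<^sub>i \<nu>\<^sub>i\<close> with \<open>\<nu>\<^sub>i \<in> N\<close>, and since
  \<open>s\<^sub>i \<nu>\<^sub>i\<close> is an involution, \<open>\<nu>\<^sub>i\<close> is a transvection \<open>x \<mapsto> x - \<lambda>\<^sub>i f\<^sub>i x \<cdot> b\<close>. Applying (a)
  to the image of the word gives (E).
\<close>

section \<open>Linear forms, reflections and transvections\<close>

definition linear_form :: "('a::field_char_0^'n \<Rightarrow> 'a) \<Rightarrow> bool" where
  "linear_form f \<longleftrightarrow> (\<forall>x y. f (x + y) = f x + f y) \<and> (\<forall>c x. f (c *s x) = c * f x)"

definition linear_endo :: "('a::field_char_0^'n \<Rightarrow> 'a^'n) \<Rightarrow> bool" where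
  "linear_endo f \<longleftrightarrow> (\<forall>x y. f (x + y) = f x + f y) \<and> (\<forall>c x. f (c *s x) = c *s f x)"

definition reflection :: "('a::field_char_0^'n \<Rightarrow> 'a) \<Rightarrow> 'a^'n \<Rightarrow> 'a^'n \<Rightarrow> 'a^'n" where
  "reflection f a z = z - f z *s a"

lemma linear_form_add: "linear_form f \<Longrightarrow> f (x + y) = f x + f y"
  and linear_form_scale: "linear_form f \<Longrightarrow> f (c *s x) = c * f x"
  by (simp_all add: linear_form_def)

lemma linear_form_diff: "linear_form f \<Longrightarrow> f (x - y) = f x - f y"
  by (metis add_diff_cancel diff_add_cancel linear_form_add)

lemma linear_endo_add: "linear_endo f \<Longrightarrow> f (x + y) = f x + f y"
  and linear_endo_scale: "linear_endo f \<Longrightarrow> f (c *s x) = c *s f x"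
  by (simp_all add: linear_endo_def)

lemma linear_endo_diff: "linear_endo f \<Longrightarrow> f (x - y) = f x - f y"
  by (metis add_diff_cancel diff_add_cancel linear_endo_add)

lemma linear_endo_id: "linear_endo id"
  by (simp add: linear_endo_def)

lemma linear_endo_comp: "linear_endo f \<Longrightarrow> linear_endo g \<Longrightarrow> linear_endo (f \<circ> g)"
  by (simp add: linear_endo_def)

lemma linear_endo_funpow: "linear_endo f \<Longrightarrow> linear_endo (f ^^ n)"
  by (induction n) (simp_all add: linear_endo_id linear_endo_comp del: comp_apply)

lemma linear_endo_reflection: "linear_form f \<Longrightarrow> linear_endo (reflection f a)"
  by (simp add: linear_endo_def reflection_def linear_form_add linear_form_scale
      vec_eq_iff algebra_simps)

lemma reflection_involutive: "linear_form f \<Longrightarrow> f a = 2 \<Longrightarrow> reflection f a \<circ> reflection f a = id"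
  by (rule ext)
    (simp add: reflection_def linear_form_diff linear_form_scale vec_eq_iff algebra_simps)

lemma reflection_comp_transvection:
  assumes "linear_form f" "f b = 0"
  shows "reflection f a \<circ> (\<lambda>z. z - (t * f z) *s b) = reflection f (a + t *s b)"
  using assms by (intro ext) (simp add: reflection_def linear_form_diff linear_form_scale
      vec_eq_iff algebra_simps)

lemma corresp_transvection:
  assumes "f b = 0"
  shows "corresp b (\<lambda>z. z - (t * f z) *s b) (psc t (- f (e 2 1), - f (e 3 1)))"
  using assms by (simp add: corresp_def psc_def vec_eq_iff)

lemma transvection_eq_id_iff:
  fixes B :: "'a::field_char_0^'n"
  assumes "B \<noteq> 0" and "h a \<noteq> 0"
  shows "(\<lambda>z. z + (c * h z) *s B) = id \<longleftrightarrow> c = 0"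
proof
  assume "(\<lambda>z. z + (c * h z) *s B) = id"
  then have "(c * h a) *s B = 0"
    by (metis add_cancel_left_right id_apply)
  then show "c = 0"
    using assms by (auto simp: vec_eq_iff)
qed (simp add: fun_eq_iff)

lemma linear_form_of_shift:
  fixes \<nu> :: "'a::field_char_0^'n \<Rightarrow> 'a^'n"
  assumes "B \<noteq> 0" and \<nu>: "linear_endo \<nu>" and shift: "\<And>x. \<exists>c. \<nu> x = x + c *s B"
  shows "\<exists>h. linear_form h \<and> (\<forall>x. \<nu> x = x + h x *s B)"
proof -
  obtain i where "B $ i \<noteq> 0"
    using \<open>B \<noteq> 0\<close> by (auto simp: vec_eq_iff)
  define h where "h x = (\<nu> x - x) $ i / B $ i" for x
  have "linear_form h"
    by (simp add: linear_form_def h_def linear_endo_add[OF \<nu>] linear_endo_scale[OF \<nu>]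
        add_divide_distrib[symmetric] algebra_simps)
  moreover have "\<nu> x = x + h x *s B" for x
    using shift[of x] \<open>B $ i \<noteq> 0\<close> by (auto simp: h_def)
  ultimately show ?thesis
    by blast
qed

lemma transvection_of_involution:
  fixes \<nu> :: "'a::field_char_0^'n \<Rightarrow> 'a^'n"
  assumes f: "linear_form f" and "f a = 2" and "f B = 0" and "B \<noteq> 0"
    and \<nu>: "linear_endo \<nu>" and "\<nu> B = B" and shift: "\<And>x. \<exists>c. \<nu> x = x + c *s B"
    and involution: "(reflection f a \<circ> \<nu>) \<circ> (reflection f a \<circ> \<nu>) = id"
  shows "\<exists>t. \<nu> = (\<lambda>z. z - (t * f z) *s B)"
proof -
  obtain h where h: "linear_form h" and \<nu>_h: "\<And>x. \<nu> x = x + h x *s B"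
    using linear_form_of_shift[OF \<open>B \<noteq> 0\<close> \<nu> shift] by blast
  have "h B = 0"
    using \<nu>_h[of B] \<open>\<nu> B = B\<close> \<open>B \<noteq> 0\<close> by simp
  have f_\<nu>: "f (\<nu> x) = f x" for x
    unfolding \<nu>_h using \<open>f B = 0\<close> by (simp add: linear_form_add[OF f] linear_form_scale[OF f])
  have "h x = f x * (h a / 2)" for x
  proof -
    define y where "y = reflection f a (\<nu> x)"
    have y: "y = x - f x *s a + h x *s B"
      unfolding y_def reflection_def f_\<nu> by (simp add: \<nu>_h vec_eq_iff)
    have "x = reflection f a (\<nu> y)"
      using involution unfolding y_def by (metis comp_apply id_apply)
    also have "\<dots> = x + (2 * h x - f x * h a) *s B"
    proof -
      have h_y: "h y = h x - f x * h a"
        unfolding y using \<open>h B = 0\<close>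
        by (simp add: linear_form_add[OF h] linear_form_diff[OF h] linear_form_scale[OF h])
      have f_y: "f y = - f x"
        unfolding y using \<open>f a = 2\<close> \<open>f B = 0\<close>
        by (simp add: linear_form_add[OF f] linear_form_diff[OF f] linear_form_scale[OF f])
      show ?thesis
        unfolding reflection_def f_\<nu> f_y unfolding \<nu>_h[of y] h_y unfolding y
        by (simp add: vec_eq_iff algebra_simps)
    qed
    finally have "(2 * h x - f x * h a) *s B = 0"
      by (metis add_cancel_left_right)
    then show ?thesis
      using \<open>B \<noteq> 0\<close> by (simp add: field_simps)
  qed
  then have "\<nu> = (\<lambda>z. z - ((- h a / 2) * f z) *s B)"
    by (simp add: fun_eq_iff \<nu>_h vec_eq_iff algebra_simps)
  then show ?thesis ..
qed

section \<open>Products of two reflections\<close>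

lemma add_inverse_ne_two:
  fixes \<omega> :: "'a::field_char_0"
  assumes "\<omega>^2 \<noteq> 1"
  shows "\<omega> + inverse \<omega> \<noteq> 2"
proof
  assume sum: "\<omega> + inverse \<omega> = 2"
  then have "\<omega> \<noteq> 0" by auto
  with sum have "(\<omega> - 1)^2 = 0" by (simp add: field_simps power2_eq_square)
  with assms show False by simp
qed

lemma funpow_eq_neg_of_recurrence:
  fixes T :: "'a::field_char_0^'n \<Rightarrow> 'a^'n"
  assumes T: "linear_endo T" and rec: "T (T v) = (\<omega> + inverse \<omega>) *s T v - v"
    and "\<omega>^2 \<noteq> 1" and "\<omega> ^ N = -1"
  shows "(T ^^ N) v = - v"
proof -
  have "\<omega> \<noteq> 0" using \<open>\<omega> ^ N = -1\<close> by (cases N) auto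
  define d where "d = \<omega> - inverse \<omega>"
  have "d \<noteq> 0"
    using \<open>\<omega>^2 \<noteq> 1\<close> \<open>\<omega> \<noteq> 0\<close> unfolding d_def by (auto simp: field_simps power2_eq_square)
  define vp where "vp = (1/d) *s (T v - inverse \<omega> *s v)"
  define vm where "vm = (1/d) *s (\<omega> *s v - T v)"
  have "vp + vm = (1/d) *s (d *s v)"
    by (simp add: vp_def vm_def d_def vec_eq_iff algebra_simps)
  then have v: "v = vp + vm"
    using \<open>d \<noteq> 0\<close> by simp
  have "T vp = \<omega> *s vp" "T vm = inverse \<omega> *s vm"
    using \<open>d \<noteq> 0\<close> \<open>\<omega> \<noteq> 0\<close> unfolding vp_def vm_def
    by (simp_all add: linear_endo_scale[OF T] linear_endo_diff[OF T] rec vec_eq_iff field_simps)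
  then have "(T ^^ n) vp = (\<omega> ^ n) *s vp" "(T ^^ n) vm = (inverse \<omega> ^ n) *s vm" for n
    by (induction n) (simp_all add: linear_endo_scale[OF T] mult.commute)
  then have "(T ^^ N) v = (\<omega> ^ N) *s vp + (inverse \<omega> ^ N) *s vm"
    by (subst v) (simp add: linear_endo_add[OF linear_endo_funpow[OF T]])
  also have "\<dots> = - v"
    using \<open>\<omega> ^ N = -1\<close> v by (simp add: power_inverse vec_eq_iff)
  finally show ?thesis .
qed

definition dihedral_word :: "('a \<Rightarrow> 'a) \<Rightarrow> ('a \<Rightarrow> 'a) \<Rightarrow> ('a \<Rightarrow> 'a) \<Rightarrow> nat \<Rightarrow> 'a \<Rightarrow> 'a" where
  "dihedral_word s t u k = (s \<circ> (t \<circ> u) ^^ k) ^^ 2"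

lemma reflection_comp_involution_square:
  assumes h: "linear_form h" and "h a = 2" and W: "linear_endo W"
    and W_W: "\<And>z. W (W z) = z" and h_W: "\<And>z. h (W z) = - h z" and W_a: "W a = c *s B - a"
  shows "(reflection h a \<circ> W) ^^ 2 = (\<lambda>z. z + (c * h z) *s B)"
proof
  fix z
  have s_W: "reflection h a (W y) = W y + h y *s a" for y
    by (simp add: reflection_def h_W)
  have "h (W z + h z *s a) = h z"
    using \<open>h a = 2\<close> by (simp add: linear_form_add[OF h] linear_form_scale[OF h] h_W)
  then have "((reflection h a \<circ> W) ^^ 2) z = W (W z + h z *s a) + h z *s a"
    by (simp add: numeral_2_eq_2 s_W)
  also have "\<dots> = z + (c * h z) *s B"
    by (simp add: linear_endo_add[OF W] linear_endo_scale[OF W] W_W W_a vec_eq_iff algebra_simps)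
  finally show "((reflection h a \<circ> W) ^^ 2) z = z + (c * h z) *s B" .
qed

locale reflection_pair =
  fixes f g :: "'a::field_char_0^'n \<Rightarrow> 'a" and u v :: "'a^'n" and x y :: 'a
  assumes linear_f: "linear_form f" and linear_g: "linear_form g"
    and f_u: "f u = 2" and g_v: "g v = 2" and f_v: "f v = - x" and g_u: "g u = - y"
    and nondegenerate: "x * y \<noteq> 4"
begin

text \<open>The projection onto \<open>span {u, v}\<close> along \<open>ker f \<inter> ker g\<close>.\<close>

definition proj :: "'a^'n \<Rightarrow> 'a^'n" where
  "proj z = ((2 * f z + x * g z) / (4 - x * y)) *s u + ((y * f z + 2 * g z) / (4 - x * y)) *s v"

lemma denominator_ne_0: "4 - x * y \<noteq> 0"
  using nondegenerate by simp

lemma linear_endo_proj: "linear_endo proj"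
  unfolding linear_endo_def proj_def
  by (simp add: linear_form_add[OF linear_f] linear_form_add[OF linear_g]
      linear_form_scale[OF linear_f] linear_form_scale[OF linear_g]
      vec_eq_iff add_divide_distrib algebra_simps)

lemma f_proj: "f (proj z) = f z" and g_proj: "g (proj z) = g z"
proof -
  have "f (proj z) = ((4 - x * y) * f z) / (4 - x * y)"
    and "g (proj z) = ((4 - x * y) * g z) / (4 - x * y)"
    unfolding proj_def using f_u f_v g_u g_v
    by (simp_all add: linear_form_add[OF linear_f] linear_form_scale[OF linear_f]
        linear_form_add[OF linear_g] linear_form_scale[OF linear_g]
        diff_divide_distrib[symmetric] add_divide_distrib[symmetric] algebra_simps)
  then show "f (proj z) = f z" "g (proj z) = g z"
    using denominator_ne_0 by simp_all
qed

lemma proj_proj: "proj (proj z) = proj z"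
  unfolding proj_def[of "proj z"] f_proj g_proj by (simp add: proj_def)

lemma proj_kernel: "f w = 0 \<Longrightarrow> g w = 0 \<Longrightarrow> proj w = 0"
  by (simp add: proj_def)

lemma proj_plane: "proj (a *s u + c *s v) = a *s u + c *s v"
proof -
  have "(2 * f (a *s u + c *s v) + x * g (a *s u + c *s v)) / (4 - x * y) = a"
       "(y * f (a *s u + c *s v) + 2 * g (a *s u + c *s v)) / (4 - x * y) = c"
    using denominator_ne_0 f_u f_v g_u g_v
    by (simp_all add: linear_form_add[OF linear_f] linear_form_scale[OF linear_f]
        linear_form_add[OF linear_g] linear_form_scale[OF linear_g] field_simps)
  then show ?thesis
    by (simp add: proj_def)
qed

lemma funpow_rotation:
  assumes "x * y - 2 = \<omega> + inverse \<omega>" and "\<omega>^2 \<noteq> 1" and "\<omega> ^ N = -1"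
  shows "(reflection f u \<circ> reflection g v) ^^ N = (\<lambda>z. z - 2 *s proj z)"
proof
  fix z
  define T where "T = reflection f u \<circ> reflection g v"
  have T: "linear_endo T"
    unfolding T_def by (intro linear_endo_comp linear_endo_reflection linear_f linear_g)
  have T_plane: "T (a *s u + c *s v) = (x*y*a - x*c - a) *s u + (a*y - c) *s v" for a c
    unfolding T_def using f_u f_v g_u g_v
    by (simp add: reflection_def linear_form_add[OF linear_f] linear_form_add[OF linear_g]
        linear_form_scale[OF linear_f] linear_form_scale[OF linear_g] linear_form_diff[OF linear_f]
        vec_eq_iff algebra_simps)
  obtain a c where proj_z: "proj z = a *s u + c *s v"
    unfolding proj_def by blast
  have "T (T (proj z)) = (\<omega> + inverse \<omega>) *s T (proj z) - proj z"
    unfolding proj_z T_plane assms(1)[symmetric] by (simp add: vec_eq_iff algebra_simps)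
  then have "(T ^^ N) (proj z) = - proj z"
    using funpow_eq_neg_of_recurrence[OF T] assms(2,3) by blast
  moreover have "(T ^^ n) (z - proj z) = z - proj z" for n
  proof -
    have "f (z - proj z) = 0" "g (z - proj z) = 0"
      by (simp_all add: linear_form_diff[OF linear_f] linear_form_diff[OF linear_g] f_proj g_proj)
    then have "T (z - proj z) = z - proj z"
      by (simp add: T_def reflection_def)
    then show ?thesis
      by (induction n) simp_all
  qed
  ultimately have "(T ^^ N) z = (z - proj z) - proj z"
    using linear_endo_add[OF linear_endo_funpow[OF T], of N "z - proj z" "proj z"] by simp
  then show "(T ^^ N) z = z - 2 *s proj z"
    by (simp add: vec_eq_iff)
qed

lemma proj_of_relation:
  assumes relation: "\<rho> *s a + \<rho>\<^sub>u *s u + \<rho>\<^sub>v *s v = \<sigma> *s B" and "\<rho> \<noteq> 0"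
    and "f B = 0" and "g B = 0"
  shows "proj a = a - (\<sigma> / \<rho>) *s B"
proof -
  have "\<rho> *s a = \<sigma> *s B - (\<rho>\<^sub>u *s u + \<rho>\<^sub>v *s v)"
    using relation by (simp add: vec_eq_iff algebra_simps)
  then have "\<rho> *s proj a = - (\<rho>\<^sub>u *s u + \<rho>\<^sub>v *s v)"
    using \<open>f B = 0\<close> \<open>g B = 0\<close>
    by (metis linear_endo_scale[OF linear_endo_proj] linear_endo_diff[OF linear_endo_proj]
        proj_kernel proj_plane diff_0 vector_smult_rzero)
  also have "\<dots> = \<rho> *s a - \<sigma> *s B"
    unfolding relation[symmetric] by (simp add: algebra_simps)
  finally show ?thesis
    using \<open>\<rho> \<noteq> 0\<close> by (simp add: vec_eq_iff field_simps)
qed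

lemma dihedral_word_eq_transvection:
  assumes rotation: "x * y - 2 = \<omega> + inverse \<omega>" "\<omega>^2 \<noteq> 1" "\<omega> ^ N = -1"
    and h: "linear_form h" and "h a = 2"
    and kernel: "\<And>w. f w = 0 \<Longrightarrow> g w = 0 \<Longrightarrow> h w = 0"
    and relation: "\<rho> *s a + \<rho>\<^sub>u *s u + \<rho>\<^sub>v *s v = \<sigma> *s B" and "\<rho> \<noteq> 0"
    and "f B = 0" and "g B = 0"
  shows "dihedral_word (reflection h a) (reflection f u) (reflection g v) N
    = (\<lambda>z. z + (2 * (\<sigma> / \<rho>) * h z) *s B)"
proof -
  define W where "W z = z - 2 *s proj z" for z
  have W: "linear_endo W"
    using linear_endo_proj by (simp add: linear_endo_def W_def vec_eq_iff algebra_simps)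
  have "W (W z) = z" for z
    using linear_endo_scale[OF linear_endo_proj] linear_endo_diff[OF linear_endo_proj]
    by (simp add: W_def proj_proj vec_eq_iff)
  moreover have "h (W z) = - h z" for z
  proof -
    have "h (z - proj z) = 0"
      by (rule kernel)
        (simp_all add: linear_form_diff[OF linear_f] linear_form_diff[OF linear_g] f_proj g_proj)
    then show ?thesis
      by (simp add: W_def linear_form_diff[OF h] linear_form_scale[OF h])
  qed
  moreover have "W a = (2 * (\<sigma> / \<rho>)) *s B - a"
    unfolding W_def proj_of_relation[OF relation \<open>\<rho> \<noteq> 0\<close> \<open>f B = 0\<close> \<open>g B = 0\<close>]
    by (simp add: vec_eq_iff algebra_simps)
  ultimately have "(reflection h a \<circ> W) ^^ 2 = (\<lambda>z. z + (2 * (\<sigma> / \<rho>) * h z) *s B)"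
    by (intro reflection_comp_involution_square[OF h \<open>h a = 2\<close> W])
  then show ?thesis
    using funpow_rotation[OF rotation] by (simp add: dihedral_word_def W_def[abs_def])
qed

end

section \<open>Roots of unity\<close>

lemma four_cos_sq_eq_cis:
  "complex_of_real (4 * (cos (pi * real_of_int k / real n))^2)
     = 2 + cis (2 * pi * real_of_int k / real n) + inverse (cis (2 * pi * real_of_int k / real n))"
proof -
  have "4 * (cos (pi * real_of_int k / real n))^2 = 2 + 2 * cos (2 * pi * real_of_int k / real n)"
    using cos_double_cos[of "pi * real_of_int k / real n"] by (simp add: mult.assoc)
  then show ?thesis
    by (simp add: complex_eq_iff)
qed

lemma cis_sq_ne_one:
  assumes "n \<ge> 3" and "coprime k (int n)"
  shows "cis (2 * pi * real_of_int k / real n) ^ 2 \<noteq> 1"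
proof
  assume sq: "cis (2 * pi * real_of_int k / real n) ^ 2 = 1"
  have "cis (2 * pi * real_of_int k / real n) ^ 2
      = cis (real 2 * (2 * pi * real_of_int k / real n))"
    by (rule Complex.DeMoivre)
  with sq have "cis (4 * pi * real_of_int k / real n) = 1"
    by (simp add: algebra_simps)
  then have "cos (4 * pi * real_of_int k / real n) = 1"
    by (metis cis.sel(1) one_complex.sel(1))
  then obtain j :: int where "4 * pi * real_of_int k / real n = real_of_int j * 2 * pi"
    using cos_one_2pi_int by blast
  then have "real_of_int (2 * k) = real_of_int (j * int n)"
    using \<open>n \<ge> 3\<close> by (simp add: field_simps)
  then have "int n dvd 2 * k"
    by (metis dvd_triv_right of_int_eq_iff)
  then have "int n dvd 2"
    using \<open>coprime k (int n)\<close> by (metis coprime_commute coprime_dvd_mult_left_iff)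
  then show False
    using \<open>n \<ge> 3\<close> zdvd_imp_le[of "int n" 2] by simp
qed

lemma cis_pow_half_eq_minus_one:
  assumes "coprime k (int n)" and "n = 2 * h" and "h \<noteq> 0"
  shows "cis (2 * pi * real_of_int k / real n) ^ h = -1"
proof -
  have "odd k"
  proof
    assume "even k"
    then have "2 dvd gcd k (int n)"
      using \<open>n = 2 * h\<close> by simp
    then show False
      using \<open>coprime k (int n)\<close> by simp
  qed
  then obtain j where k: "k = 2 * j + 1"
    by (metis oddE)
  have "cis (2 * pi * real_of_int k / real n) ^ h
      = cis (real h * (2 * pi * real_of_int k / real n))"
    by (rule Complex.DeMoivre)
  also have "real h * (2 * pi * real_of_int k / real n) = 2 * pi * real_of_int j + pi"
    using \<open>n = 2 * h\<close> \<open>h \<noteq> 0\<close> k by (simp add: field_simps)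
  also have "cis (2 * pi * real_of_int j + pi) = -1"
    by (simp add: cis_mult[symmetric])
  finally show ?thesis .
qed

lemma four_cos_sq_ne_four:
  assumes "n \<ge> 3" and "coprime k (int n)"
  shows "complex_of_real (4 * (cos (pi * real_of_int k / real n))^2) \<noteq> 4"
  using add_inverse_ne_two[OF cis_sq_ne_one[OF assms]] unfolding four_cos_sq_eq_cis
  by (metis add.assoc add_left_cancel numeral_Bit0)

lemma four_cos_sq_half_turn:
  assumes "n \<ge> 3" and "coprime k (int n)" and "n = 2 * h"
  shows "\<exists>\<omega>. complex_of_real (4 * (cos (pi * real_of_int k / real n))^2) = 2 + \<omega> + inverse \<omega>
    \<and> \<omega>^2 \<noteq> 1 \<and> \<omega> ^ h = -1"
  using four_cos_sq_eq_cis cis_sq_ne_one[OF assms(1,2)] cis_pow_half_eq_minus_one[OF assms(2,3)]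
    assms(1,3)
  by (metis mult_0_right not_numeral_le_zero)

section \<open>Splittings of a quotient map\<close>

lemma (in normal) section_rcoset_hom:
  assumes "\<tau> \<in> hom (G Mod H) G"
  shows "(\<lambda>x. \<tau> (H #> x)) \<in> hom G G"
  using Group.hom_compose[OF r_coset_hom_Mod assms] by (simp add: comp_def)

lemma (in normal) section_rcoset_of_mem:
  assumes "\<tau> \<in> hom (G Mod H) G" and "w \<in> H"
  shows "\<tau> (H #> w) = \<one>"
proof -
  have "H #> w = \<one>\<^bsub>G Mod H\<^esub>"
    using rcos_const[OF is_group \<open>w \<in> H\<close>] by (simp add: FactGroup_def)
  then show ?thesis
    using hom_one[OF assms(1) factorgroup_is_group is_group] by simp
qed

lemma (in normal) section_rcoset_in_coset:
  assumes "\<tau> \<in> hom (G Mod H) G" and sec: "\<forall>X\<in>carrier (G Mod H). H #> \<tau> X = X"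
    and s: "s \<in> carrier G"
  shows "\<exists>\<nu>\<in>H. \<tau> (H #> s) = s \<otimes> \<nu>"
proof -
  have coset: "H #> s \<in> carrier (G Mod H)"
    using rcosetsI[OF subset s] by (simp add: FactGroup_def)
  then have "\<tau> (H #> s) \<in> carrier G"
    using hom_in_carrier[OF assms(1)] by blast
  then have "\<tau> (H #> s) \<in> H #> s"
    using rcos_self[OF _ subgroup_axioms] sec coset by metis
  then obtain n where n: "n \<in> H" "\<tau> (H #> s) = n \<otimes> s"
    unfolding r_coset_def by blast
  have "inv s \<otimes> n \<otimes> inv (inv s) \<in> H"
    using n(1) s by (simp add: inv_op_closed1)
  moreover have "s \<otimes> (inv s \<otimes> n \<otimes> inv (inv s)) = n \<otimes> s"
    using n(1) s by (simp add: m_assoc[symmetric])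
  ultimately show ?thesis
    using n(2) by metis
qed

section \<open>The reflection group\<close>

definition coroot1 :: "complex \<Rightarrow> complex \<Rightarrow> complex^3 \<Rightarrow> complex" where
  "coroot1 \<alpha> \<beta> z = 2 * z$1 - \<alpha> * z$2 - \<beta> * z$3"

definition coroot2 :: "complex \<Rightarrow> complex^3 \<Rightarrow> complex" where
  "coroot2 l z = - z$1 + 2 * z$2 - l * z$3"

definition coroot3 :: "complex \<Rightarrow> complex^3 \<Rightarrow> complex" where
  "coroot3 m z = - z$1 - m * z$2 + 2 * z$3"

lemma linear_form_coroots:
  "linear_form (coroot1 \<alpha> \<beta>)" "linear_form (coroot2 l)" "linear_form (coroot3 m)"
  by (simp_all add: linear_form_def coroot1_def coroot2_def coroot3_def algebra_simps)

lemma coroots_basis [simp]: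
  "coroot1 \<alpha> \<beta> (e 1 1) = 2" "coroot1 \<alpha> \<beta> (e 2 1) = - \<alpha>" "coroot1 \<alpha> \<beta> (e 3 1) = - \<beta>"
  "coroot2 l (e 1 1) = -1" "coroot2 l (e 2 1) = 2" "coroot2 l (e 3 1) = - l"
  "coroot3 m (e 1 1) = -1" "coroot3 m (e 2 1) = - m" "coroot3 m (e 3 1) = 2"
  by (simp_all add: coroot1_def coroot2_def coroot3_def e_def)

lemma rs_eq_reflection:
  "rs1 \<alpha> \<beta> = reflection (coroot1 \<alpha> \<beta>) (e 1 1)"
  "rs2 l = reflection (coroot2 l) (e 2 1)"
  "rs3 m = reflection (coroot3 m) (e 3 1)"
  by (simp_all add: fun_eq_iff rs1_def rs2_def rs3_def reflection_def coroot1_def coroot2_def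
      coroot3_def e_def vec_eq_iff)

lemma Ggrp_generators: "rs1 \<alpha> \<beta> \<in> Ggrp \<alpha> \<beta> l m" "rs2 l \<in> Ggrp \<alpha> \<beta> l m" "rs3 m \<in> Ggrp \<alpha> \<beta> l m"
  using Ggrp.mul1[OF Ggrp.one] Ggrp.mul2[OF Ggrp.one] Ggrp.mul3[OF Ggrp.one] by simp_all

lemma Ggrp_comp:
  assumes "g \<in> Ggrp \<alpha> \<beta> l m" and "h \<in> Ggrp \<alpha> \<beta> l m"
  shows "g \<circ> h \<in> Ggrp \<alpha> \<beta> l m"
  using assms(2)
proof (induction h rule: Ggrp.induct)
  case (mul1 h)
  then show ?case using Ggrp.mul1[of "g \<circ> h"] by (metis comp_assoc)
next
  case (mul2 h)
  then show ?case using Ggrp.mul2[of "g \<circ> h"] by (metis comp_assoc)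
next
  case (mul3 h)
  then show ?case using Ggrp.mul3[of "g \<circ> h"] by (metis comp_assoc)
qed (simp add: assms(1))

lemma Ggrp_funpow: "g \<in> Ggrp \<alpha> \<beta> l m \<Longrightarrow> g ^^ n \<in> Ggrp \<alpha> \<beta> l m"
  by (induction n) (simp_all add: Ggrp.one Ggrp_comp)

lemma Ggrp_dihedral_word:
  "s \<in> Ggrp \<alpha> \<beta> l m \<Longrightarrow> t \<in> Ggrp \<alpha> \<beta> l m \<Longrightarrow> u \<in> Ggrp \<alpha> \<beta> l m
    \<Longrightarrow> dihedral_word s t u k \<in> Ggrp \<alpha> \<beta> l m"
  by (simp add: dihedral_word_def Ggrp_comp Ggrp_funpow)

lemma linear_endo_Ggrp: "g \<in> Ggrp \<alpha> \<beta> l m \<Longrightarrow> linear_endo g"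
  by (induction rule: Ggrp.induct)
     (simp_all only: linear_endo_id linear_endo_comp linear_endo_reflection rs_eq_reflection
       linear_form_coroots)

lemma rs_involutive: "rs1 \<alpha> \<beta> \<circ> rs1 \<alpha> \<beta> = id" "rs2 l \<circ> rs2 l = id" "rs3 m \<circ> rs3 m = id"
  by (simp_all add: rs_eq_reflection reflection_involutive linear_form_coroots)

lemma Ggrp_inverse: "g \<in> Ggrp \<alpha> \<beta> l m \<Longrightarrow> \<exists>h \<in> Ggrp \<alpha> \<beta> l m. h \<circ> g = id \<and> g \<circ> h = id"
proof (induction rule: Ggrp.induct)
  have step: "\<exists>h' \<in> Ggrp \<alpha> \<beta> l m. h' \<circ> (g \<circ> s) = id \<and> (g \<circ> s) \<circ> h' = id"
    if "h \<in> Ggrp \<alpha> \<beta> l m" "h \<circ> g = id" "g \<circ> h = id" "s \<in> Ggrp \<alpha> \<beta> l m" "s \<circ> s = id"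
    for g h s
  proof (intro bexI conjI)
    show "s \<circ> h \<in> Ggrp \<alpha> \<beta> l m" using that by (simp add: Ggrp_comp)
    show "(s \<circ> h) \<circ> (g \<circ> s) = id" "(g \<circ> s) \<circ> (s \<circ> h) = id"
      using that by (simp_all add: comp_assoc) (simp_all add: comp_assoc[symmetric])
  qed
  case one show ?case by (intro bexI[of _ id]) (simp_all add: Ggrp.one)
  case mul1 then show ?case using step Ggrp_generators rs_involutive by blast
  case mul2 then show ?case using step Ggrp_generators rs_involutive by blast
  case mul3 then show ?case using step Ggrp_generators rs_involutive by blast
qed

lemma group_Gstruct: "group (Gstruct (Ggrp \<alpha> \<beta> l m))"
proof (rule groupI)
  show "\<exists>y \<in> carrier (Gstruct (Ggrp \<alpha> \<beta> l m)).
      y \<otimes>\<^bsub>Gstruct (Ggrp \<alpha> \<beta> l m)\<^esub> x = \<one>\<^bsub>Gstruct (Ggrp \<alpha> \<beta> l m)\<^esub>"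
    if "x \<in> carrier (Gstruct (Ggrp \<alpha> \<beta> l m))" for x
    using Ggrp_inverse that by (fastforce simp: Gstruct_def)
qed (simp_all add: Gstruct_def Ggrp_comp Ggrp.one comp_assoc)

lemma Gstruct_inv:
  assumes "g \<in> Ggrp \<alpha> \<beta> l m"
  shows "inv\<^bsub>Gstruct (Ggrp \<alpha> \<beta> l m)\<^esub> g \<in> Ggrp \<alpha> \<beta> l m"
    and "g \<circ> inv\<^bsub>Gstruct (Ggrp \<alpha> \<beta> l m)\<^esub> g = id"
  using group.inv_closed[OF group_Gstruct] group.r_inv[OF group_Gstruct] assms
  by (simp_all add: Gstruct_def)

lemma hom_Gstruct_dihedral_word:
  assumes \<sigma>: "\<sigma> \<in> hom (Gstruct (Ggrp \<alpha> \<beta> l m)) (Gstruct (Ggrp \<alpha> \<beta> l m))"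
    and gens: "s \<in> Ggrp \<alpha> \<beta> l m" "t \<in> Ggrp \<alpha> \<beta> l m" "u \<in> Ggrp \<alpha> \<beta> l m"
  shows "\<sigma> (dihedral_word s t u k) = dihedral_word (\<sigma> s) (\<sigma> t) (\<sigma> u) k"
proof -
  have comp: "\<sigma> (g \<circ> h) = \<sigma> g \<circ> \<sigma> h" if "g \<in> Ggrp \<alpha> \<beta> l m" "h \<in> Ggrp \<alpha> \<beta> l m" for g h
    using hom_mult[OF \<sigma>] that by (simp add: Gstruct_def)
  have "\<sigma> id = id"
    using hom_one[OF \<sigma> group_Gstruct group_Gstruct] by (simp add: Gstruct_def)
  then have funpow: "\<sigma> (g ^^ n) = \<sigma> g ^^ n" if "g \<in> Ggrp \<alpha> \<beta> l m" for g n
    using that by (induction n) (simp_all add: comp Ggrp_funpow)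
  show ?thesis
    using gens by (simp add: dihedral_word_def funpow comp Ggrp_comp Ggrp_funpow)
qed

section \<open>The reducible representation\<close>

definition b_vector :: "complex \<Rightarrow> complex \<Rightarrow> complex \<Rightarrow> complex^3" where
  "b_vector \<gamma> l m = e 1 (4 - \<gamma>) + e 2 (l + 2) + e 3 (m + 2)"

locale reducible_cartan =
  fixes \<alpha> \<beta> \<gamma> l m :: complex
  assumes lm: "l * m = \<gamma>" and Delta: "8 - 2*\<alpha> - 2*\<beta> - 2*\<gamma> - (\<alpha> * l + \<beta> * m) = 0"
    and alpha_ne_4: "\<alpha> \<noteq> 4" and beta_ne_4: "\<beta> \<noteq> 4" and gamma_ne_4: "\<gamma> \<noteq> 4"
begin

abbreviation "b \<equiv> b_vector \<gamma> l m"
abbreviation "G \<equiv> Ggrp \<alpha> \<beta> l m"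
abbreviation "N \<equiv> Nsub G"
abbreviation "splitting_sum t1 t2 t3 \<equiv> (4 - \<gamma>) * t1 + (l + 2) * t2 + (m + 2) * t3"
abbreviation "splitting_relation t1 t2 t3 \<equiv> splitting_sum t1 t2 t3 = -1"

text \<open>These are the \<open>s\<^sub>i \<nu>\<^sub>i\<close> for the \<open>\<nu>\<^sub>i \<in> N\<close> corresponding to \<open>t c\<^sub>i\<close>, see \<open>rs_comp_corresp\<close>.\<close>

abbreviation "twisted_rs1 t \<equiv> reflection (coroot1 \<alpha> \<beta>) (e 1 1 + t *s b)"
abbreviation "twisted_rs2 t \<equiv> reflection (coroot2 l) (e 2 1 + t *s b)"
abbreviation "twisted_rs3 t \<equiv> reflection (coroot3 m) (e 3 1 + t *s b)"

lemma l_plus_2_ne_0: "l + 2 \<noteq> 0"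
proof
  assume "l + 2 = 0"
  then have "(4 - \<beta>) * (4 - \<gamma>) = 2 * (8 - 2*\<alpha> - 2*\<beta> - 2*\<gamma> - (\<alpha> * l + \<beta> * m))"
    unfolding lm[symmetric] by (simp add: algebra_simps add_eq_0_iff2)
  then show False
    using Delta beta_ne_4 gamma_ne_4 by simp
qed

lemma m_plus_2_ne_0: "m + 2 \<noteq> 0"
proof
  assume "m + 2 = 0"
  then have "(4 - \<alpha>) * (4 - \<gamma>) = 2 * (8 - 2*\<alpha> - 2*\<beta> - 2*\<gamma> - (\<alpha> * l + \<beta> * m))"
    unfolding lm[symmetric] by (simp add: algebra_simps add_eq_0_iff2)
  then show False
    using Delta alpha_ne_4 gamma_ne_4 by simp
qed

lemma b_ne_0: "b \<noteq> 0"
proof -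
  have "b $ 3 = m + 2"
    by (simp add: b_vector_def e_def)
  then show ?thesis
    using m_plus_2_ne_0 by auto
qed

lemma coroots_b [simp]: "coroot1 \<alpha> \<beta> b = 0" "coroot2 l b = 0" "coroot3 m b = 0"
  using Delta lm
  by (simp_all add: coroot1_def coroot2_def coroot3_def b_vector_def e_def algebra_simps)

lemma Ggrp_fixes_b: "g \<in> G \<Longrightarrow> g b = b"
  by (induction rule: Ggrp.induct) (simp_all add: rs_eq_reflection reflection_def)

lemma coroot_kernel_eq_span_b:
  assumes "coroot2 l v = 0" and "coroot3 m v = 0"
  shows "v = (v $ 3 / (m + 2)) *s b"
proof -
  have "(m + 2) * v $ 2 = (l + 2) * v $ 3" and v1: "v $ 1 = 2 * v $ 2 - l * v $ 3"
    using assms by (simp_all add: coroot2_def coroot3_def algebra_simps)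
  then have v2: "v $ 2 = (l + 2) * v $ 3 / (m + 2)"
    using m_plus_2_ne_0 by (simp add: field_simps)
  have "v $ 1 = v $ 3 / (m + 2) * (4 - \<gamma>)"
    unfolding v1 v2 using m_plus_2_ne_0 lm[symmetric] by (simp add: field_simps)
  moreover have "v $ 2 = v $ 3 / (m + 2) * (l + 2)"
    unfolding v2 using m_plus_2_ne_0 by (simp add: field_simps)
  moreover have "v $ 3 = v $ 3 / (m + 2) * (m + 2)"
    using m_plus_2_ne_0 by simp
  ultimately show ?thesis
    by (simp add: b_vector_def e_def vec_eq_iff forall_3)
qed

lemma fixed_vecs_Ggrp: "fixed_vecs G = range (\<lambda>c. c *s b)"
proof
  show "range (\<lambda>c. c *s b) \<subseteq> fixed_vecs G"
    by (auto simp: fixed_vecs_def linear_endo_scale[OF linear_endo_Ggrp] Ggrp_fixes_b)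
next
  show "fixed_vecs G \<subseteq> range (\<lambda>c. c *s b)"
  proof
    fix v
    assume "v \<in> fixed_vecs G"
    then have "rs2 l v = v" "rs3 m v = v"
      using Ggrp_generators by (auto simp: fixed_vecs_def)
    then have "coroot2 l v = 0" "coroot3 m v = 0"
      by (auto simp: rs2_def rs3_def coroot2_def coroot3_def e_def vec_eq_iff
          dest: spec[of _ 2] spec[of _ 3])
    then have "v = (v $ 3 / (m + 2)) *s b"
      by (rule coroot_kernel_eq_span_b)
    then show "v \<in> range (\<lambda>c. c *s b)"
      by blast
  qed
qed

lemma mem_Nsub_iff: "\<nu> \<in> N \<longleftrightarrow> \<nu> \<in> G \<and> (\<forall>x. \<exists>c. \<nu> x = x + c *s b)"
proof -
  have "\<nu> x - x = c *s b \<longleftrightarrow> \<nu> x = x + c *s b" for x c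
    by (auto simp: algebra_simps)
  then show ?thesis
    by (simp add: Nsub_def fixed_vecs_Ggrp image_def)
qed

lemma id_mem_Nsub: "id \<in> N"
  unfolding mem_Nsub_iff using Ggrp.one by (metis add.right_neutral id_apply vector_smult_lzero)

lemma Nsub_conjugate:
  assumes "g \<in> G" "\<nu> \<in> N" "g' \<in> G" and "g \<circ> g' = id"
  shows "g \<circ> \<nu> \<circ> g' \<in> N"
  unfolding mem_Nsub_iff
proof
  show "g \<circ> \<nu> \<circ> g' \<in> G"
    using assms by (simp add: mem_Nsub_iff Ggrp_comp)
  show "\<forall>x. \<exists>c. (g \<circ> \<nu> \<circ> g') x = x + c *s b"
  proof
    fix x
    obtain c where "\<nu> (g' x) = g' x + c *s b"
      using \<open>\<nu> \<in> N\<close> by (auto simp: mem_Nsub_iff)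
    then have "(g \<circ> \<nu> \<circ> g') x = g (g' x) + c *s g b"
      using linear_endo_Ggrp[OF \<open>g \<in> G\<close>] by (simp add: linear_endo_add linear_endo_scale)
    then show "\<exists>c. (g \<circ> \<nu> \<circ> g') x = x + c *s b"
      using \<open>g \<circ> g' = id\<close> Ggrp_fixes_b[OF \<open>g \<in> G\<close>] by (metis comp_apply id_apply)
  qed
qed

lemma subgroup_Nsub: "subgroup N (Gstruct G)"
proof (rule group.subgroupI[OF group_Gstruct])
  show "N \<subseteq> carrier (Gstruct G)"
    by (auto simp: Gstruct_def mem_Nsub_iff)
  show "N \<noteq> {}"
    using id_mem_Nsub by blast
  show "inv\<^bsub>Gstruct G\<^esub> \<nu> \<in> N" if \<nu>: "\<nu> \<in> N" for \<nu>
    unfolding mem_Nsub_iff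
  proof (intro conjI allI)
    have "\<nu> \<in> G"
      using \<nu> by (simp add: mem_Nsub_iff)
    then show "inv\<^bsub>Gstruct G\<^esub> \<nu> \<in> G"
      by (rule Gstruct_inv(1))
    fix x
    obtain c where "\<nu> ((inv\<^bsub>Gstruct G\<^esub> \<nu>) x) = (inv\<^bsub>Gstruct G\<^esub> \<nu>) x + c *s b"
      using \<nu> by (auto simp: mem_Nsub_iff)
    then have "(inv\<^bsub>Gstruct G\<^esub> \<nu>) x = x + (- c) *s b"
      using Gstruct_inv(2)[OF \<open>\<nu> \<in> G\<close>] by (simp add: pointfree_idE algebra_simps)
    then show "\<exists>c. (inv\<^bsub>Gstruct G\<^esub> \<nu>) x = x + c *s b" ..
  qed
  show "\<nu> \<otimes>\<^bsub>Gstruct G\<^esub> \<mu> \<in> N" if \<nu>\<mu>: "\<nu> \<in> N" "\<mu> \<in> N" for \<nu> \<mu>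
    unfolding mem_Nsub_iff
  proof (intro conjI allI)
    show "\<nu> \<otimes>\<^bsub>Gstruct G\<^esub> \<mu> \<in> G"
      using \<nu>\<mu> by (simp add: Gstruct_def mem_Nsub_iff Ggrp_comp)
    fix x
    obtain d c where "\<mu> x = x + d *s b" "\<nu> (\<mu> x) = \<mu> x + c *s b"
      using \<nu>\<mu> by (meson mem_Nsub_iff)
    then have "(\<nu> \<otimes>\<^bsub>Gstruct G\<^esub> \<mu>) x = x + (d + c) *s b"
      by (simp add: Gstruct_def vec_eq_iff algebra_simps)
    then show "\<exists>c. (\<nu> \<otimes>\<^bsub>Gstruct G\<^esub> \<mu>) x = x + c *s b" ..
  qed
qed

lemma normal_Nsub: "N \<lhd> Gstruct G"
proof -
  have "g \<otimes>\<^bsub>Gstruct G\<^esub> \<nu> \<otimes>\<^bsub>Gstruct G\<^esub> inv\<^bsub>Gstruct G\<^esub> g \<in> N"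
    if "g \<in> carrier (Gstruct G)" "\<nu> \<in> N" for g \<nu>
    using Nsub_conjugate[OF _ \<open>\<nu> \<in> N\<close> Gstruct_inv] that by (simp add: Gstruct_def)
  with subgroup_Nsub show ?thesis
    by (simp add: group.normal_inv_iff[OF group_Gstruct])
qed

lemma linear_endo_eq_on_basis:
  assumes \<phi>: "linear_endo \<phi>" and \<psi>: "linear_endo \<psi>"
    and "\<phi> b = \<psi> b" "\<phi> (e 2 1) = \<psi> (e 2 1)" "\<phi> (e 3 1) = \<psi> (e 3 1)"
  shows "\<phi> = \<psi>"
proof
  fix z :: "complex^3"
  define c where "c = z $ 1 / (4 - \<gamma>)"
  have z: "z = c *s b + (z $ 2 - c * (l + 2)) *s e 2 1 + (z $ 3 - c * (m + 2)) *s e 3 1"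
    using gamma_ne_4 by (simp add: c_def b_vector_def e_def vec_eq_iff forall_3)
  show "\<phi> z = \<psi> z"
    by (subst (1 2) z) (simp only: linear_endo_add[OF \<phi>] linear_endo_scale[OF \<phi>]
        linear_endo_add[OF \<psi>] linear_endo_scale[OF \<psi>] assms(3-5))
qed

lemma eq_transvection_if_corresp:
  assumes "linear_endo \<nu>" and f: "linear_form f" and "f b = 0"
    and "corresp b \<nu> (psc t (- f (e 2 1), - f (e 3 1)))"
  shows "\<nu> = (\<lambda>z. z - (t * f z) *s b)"
proof (rule linear_endo_eq_on_basis)
  show "linear_endo (\<lambda>z. z - (t * f z) *s b)"
    by (simp add: linear_endo_def linear_form_add[OF f] linear_form_scale[OF f]
        vec_eq_iff algebra_simps)
  show "\<nu> b = b - (t * f b) *s b" "\<nu> (e 2 1) = e 2 1 - (t * f (e 2 1)) *s b"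
    "\<nu> (e 3 1) = e 3 1 - (t * f (e 3 1)) *s b"
    using assms(3,4) by (simp_all add: corresp_def psc_def vec_eq_iff)
qed fact

lemma reflection_comp_corresp:
  assumes "\<nu> \<in> N" and f: "linear_form f" and "f b = 0"
    and "corresp b \<nu> (psc t (- f (e 2 1), - f (e 3 1)))"
  shows "reflection f a \<circ> \<nu> = reflection f (a + t *s b)"
proof -
  have "linear_endo \<nu>"
    using \<open>\<nu> \<in> N\<close> linear_endo_Ggrp mem_Nsub_iff by blast
  then have "\<nu> = (\<lambda>z. z - (t * f z) *s b)"
    using eq_transvection_if_corresp f assms(3,4) by blast
  then show ?thesis
    using reflection_comp_transvection[OF f \<open>f b = 0\<close>] by simp
qed

lemma rs_comp_corresp:
  assumes "\<nu> \<in> N"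
  shows "corresp b \<nu> (psc t (\<alpha>, \<beta>)) \<Longrightarrow> rs1 \<alpha> \<beta> \<circ> \<nu> = twisted_rs1 t"
    and "corresp b \<nu> (psc t (-2, l)) \<Longrightarrow> rs2 l \<circ> \<nu> = twisted_rs2 t"
    and "corresp b \<nu> (psc t (m, -2)) \<Longrightarrow> rs3 m \<circ> \<nu> = twisted_rs3 t"
  using reflection_comp_corresp[OF assms linear_form_coroots(1)]
    reflection_comp_corresp[OF assms linear_form_coroots(2)]
    reflection_comp_corresp[OF assms linear_form_coroots(3)]
  by (simp_all add: rs_eq_reflection)

lemma coroots_shift [simp]:
  "coroot1 \<alpha> \<beta> (x + t *s b) = coroot1 \<alpha> \<beta> x"
  "coroot2 l (x + t *s b) = coroot2 l x"
  "coroot3 m (x + t *s b) = coroot3 m x"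
  by (simp_all add: linear_form_add linear_form_scale linear_form_coroots)

lemma coroot_kernels:
  shows "coroot2 l w = 0 \<Longrightarrow> coroot3 m w = 0 \<Longrightarrow> coroot1 \<alpha> \<beta> w = 0"
    and "coroot3 m w = 0 \<Longrightarrow> coroot1 \<alpha> \<beta> w = 0 \<Longrightarrow> coroot2 l w = 0"
    and "coroot1 \<alpha> \<beta> w = 0 \<Longrightarrow> coroot2 l w = 0 \<Longrightarrow> coroot3 m w = 0"
proof -
  have "(2 + l) * coroot1 \<alpha> \<beta> w + (4 - \<beta>) * coroot2 l w + (2 * l + \<beta>) * coroot3 m w
      = (8 - 2*\<alpha> - 2*\<beta> - 2*(l*m) - (\<alpha> * l + \<beta> * m)) * w $ 2"
    and "(2 + m) * coroot1 \<alpha> \<beta> w + (2 * m + \<alpha>) * coroot2 l w + (4 - \<alpha>) * coroot3 m w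
      = (8 - 2*\<alpha> - 2*\<beta> - 2*(l*m) - (\<alpha> * l + \<beta> * m)) * w $ 3"
    by (simp_all add: coroot1_def coroot2_def coroot3_def algebra_simps)
  then have dep2: "(2 + l) * coroot1 \<alpha> \<beta> w + (4 - \<beta>) * coroot2 l w + (2 * l + \<beta>) * coroot3 m w = 0"
    and dep3: "(2 + m) * coroot1 \<alpha> \<beta> w + (2 * m + \<alpha>) * coroot2 l w + (4 - \<alpha>) * coroot3 m w = 0"
    using Delta lm by simp_all
  show "coroot2 l w = 0 \<Longrightarrow> coroot3 m w = 0 \<Longrightarrow> coroot1 \<alpha> \<beta> w = 0"
    using dep3 m_plus_2_ne_0 by (simp add: add.commute)
  show "coroot3 m w = 0 \<Longrightarrow> coroot1 \<alpha> \<beta> w = 0 \<Longrightarrow> coroot2 l w = 0"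
    using dep2 beta_ne_4 by simp
  show "coroot1 \<alpha> \<beta> w = 0 \<Longrightarrow> coroot2 l w = 0 \<Longrightarrow> coroot3 m w = 0"
    using dep3 alpha_ne_4 by simp
qed

lemma twisted_rs_zero: "twisted_rs1 0 = rs1 \<alpha> \<beta>" "twisted_rs2 0 = rs2 l" "twisted_rs3 0 = rs3 m"
  by (simp_all add: rs_eq_reflection)

lemma shifted_roots_relation:
  "(4 - \<gamma>) *s (e 1 1 + t1 *s b) + (l + 2) *s (e 2 1 + t2 *s b) + (m + 2) *s (e 3 1 + t3 *s b)
    = (1 + splitting_sum t1 t2 t3) *s b"
  by (simp add: b_vector_def e_def vec_eq_iff algebra_simps)

lemma dihedral_word_r:
  assumes "\<gamma> = 2 + \<omega> + inverse \<omega>" and "\<omega>^2 \<noteq> 1" and "\<omega> ^ k = -1"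
  shows "dihedral_word (twisted_rs1 t1) (twisted_rs2 t2) (twisted_rs3 t3) k
    = (\<lambda>z. z + (2 * ((1 + splitting_sum t1 t2 t3) / (4 - \<gamma>)) * coroot1 \<alpha> \<beta> z) *s b)"
proof -
  interpret reflection_pair "coroot2 l" "coroot3 m" "e 2 1 + t2 *s b" "e 3 1 + t3 *s b" l m
    using alpha_ne_4 beta_ne_4 gamma_ne_4 lm by unfold_locales (simp_all add: linear_form_coroots)
  show ?thesis
  proof (rule dihedral_word_eq_transvection)
    show "l * m - 2 = \<omega> + inverse \<omega>"
      using assms(1) lm by simp
    show "(4 - \<gamma>) *s (e 1 1 + t1 *s b) + (l + 2) *s (e 2 1 + t2 *s b) + (m + 2) *s (e 3 1 + t3 *s b)
        = (1 + splitting_sum t1 t2 t3) *s b"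
      by (rule shifted_roots_relation)
  qed (use assms(2,3) gamma_ne_4 coroot_kernels(1) in \<open>simp_all add: linear_form_coroots\<close>)
qed

lemma dihedral_word_q:
  assumes "\<beta> = 2 + \<omega> + inverse \<omega>" and "\<omega>^2 \<noteq> 1" and "\<omega> ^ k = -1"
  shows "dihedral_word (twisted_rs2 t2) (twisted_rs3 t3) (twisted_rs1 t1) k
    = (\<lambda>z. z + (2 * ((1 + splitting_sum t1 t2 t3) / (l + 2)) * coroot2 l z) *s b)"
proof -
  interpret reflection_pair "coroot3 m" "coroot1 \<alpha> \<beta>" "e 3 1 + t3 *s b" "e 1 1 + t1 *s b" 1 \<beta>
    using alpha_ne_4 beta_ne_4 gamma_ne_4 lm by unfold_locales (simp_all add: linear_form_coroots)
  show ?thesis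
  proof (rule dihedral_word_eq_transvection)
    show "1 * \<beta> - 2 = \<omega> + inverse \<omega>"
      using assms(1) by simp
    show "(l + 2) *s (e 2 1 + t2 *s b) + (m + 2) *s (e 3 1 + t3 *s b) + (4 - \<gamma>) *s (e 1 1 + t1 *s b)
        = (1 + splitting_sum t1 t2 t3) *s b"
      using shifted_roots_relation by (simp add: algebra_simps)
  qed (use assms(2,3) l_plus_2_ne_0 coroot_kernels(2) in \<open>simp_all add: linear_form_coroots\<close>)
qed

lemma dihedral_word_p:
  assumes "\<alpha> = 2 + \<omega> + inverse \<omega>" and "\<omega>^2 \<noteq> 1" and "\<omega> ^ k = -1"
  shows "dihedral_word (twisted_rs3 t3) (twisted_rs1 t1) (twisted_rs2 t2) k
    = (\<lambda>z. z + (2 * ((1 + splitting_sum t1 t2 t3) / (m + 2)) * coroot3 m z) *s b)"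
proof -
  interpret reflection_pair "coroot1 \<alpha> \<beta>" "coroot2 l" "e 1 1 + t1 *s b" "e 2 1 + t2 *s b" \<alpha> 1
    using alpha_ne_4 beta_ne_4 gamma_ne_4 lm by unfold_locales (simp_all add: linear_form_coroots)
  show ?thesis
  proof (rule dihedral_word_eq_transvection)
    show "\<alpha> * 1 - 2 = \<omega> + inverse \<omega>"
      using assms(1) by simp
    show "(m + 2) *s (e 3 1 + t3 *s b) + (4 - \<gamma>) *s (e 1 1 + t1 *s b) + (l + 2) *s (e 2 1 + t2 *s b)
        = (1 + splitting_sum t1 t2 t3) *s b"
      using shifted_roots_relation by (simp add: algebra_simps)
  qed (use assms(2,3) m_plus_2_ne_0 coroot_kernels(3) in \<open>simp_all add: linear_form_coroots\<close>)
qed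

lemma twisted_dihedral_word_eq_id_iff:
  assumes "\<nu>1 \<in> N" "corresp b \<nu>1 (psc t1 (\<alpha>, \<beta>))" "\<nu>2 \<in> N" "corresp b \<nu>2 (psc t2 (-2, l))"
    "\<nu>3 \<in> N" "corresp b \<nu>3 (psc t3 (m, -2))"
    and rotation: "\<omega>^2 \<noteq> 1" "\<omega> ^ k = -1"
  shows "\<gamma> = 2 + \<omega> + inverse \<omega> \<Longrightarrow>
      dihedral_word (rs1 \<alpha> \<beta> \<circ> \<nu>1) (rs2 l \<circ> \<nu>2) (rs3 m \<circ> \<nu>3) k = id \<longleftrightarrow> splitting_relation t1 t2 t3"
    and "\<beta> = 2 + \<omega> + inverse \<omega> \<Longrightarrow>
      dihedral_word (rs2 l \<circ> \<nu>2) (rs3 m \<circ> \<nu>3) (rs1 \<alpha> \<beta> \<circ> \<nu>1) k = id \<longleftrightarrow> splitting_relation t1 t2 t3"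
    and "\<alpha> = 2 + \<omega> + inverse \<omega> \<Longrightarrow>
      dihedral_word (rs3 m \<circ> \<nu>3) (rs1 \<alpha> \<beta> \<circ> \<nu>1) (rs2 l \<circ> \<nu>2) k = id \<longleftrightarrow> splitting_relation t1 t2 t3"
proof -
  have scaled: "2 * ((1 + splitting_sum t1 t2 t3) / \<rho>) = 0 \<longleftrightarrow> splitting_relation t1 t2 t3"
    if "\<rho> \<noteq> 0" for \<rho>
    using that by (simp only: mult_eq_0_iff divide_eq_0_iff zero_neq_numeral[symmetric] add_eq_0_iff
        simp_thms)
  note twisted = rs_comp_corresp(1)[OF assms(1,2)] rs_comp_corresp(2)[OF assms(3,4)]
    rs_comp_corresp(3)[OF assms(5,6)]
  have conclude: "W = id \<longleftrightarrow> splitting_relation t1 t2 t3"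
    if "W = (\<lambda>z. z + (2 * ((1 + splitting_sum t1 t2 t3) / \<rho>) * h z) *s b)" "h a = 2" "\<rho> \<noteq> 0"
    for W h a \<rho>
  proof -
    have "h a \<noteq> 0"
      using that(2) by simp
    show ?thesis
      unfolding that(1) transvection_eq_id_iff[OF b_ne_0, of h a, OF \<open>h a \<noteq> 0\<close>]
      by (rule scaled[OF that(3)])
  qed
  show "dihedral_word (rs1 \<alpha> \<beta> \<circ> \<nu>1) (rs2 l \<circ> \<nu>2) (rs3 m \<circ> \<nu>3) k = id \<longleftrightarrow> splitting_relation t1 t2 t3"
    if "\<gamma> = 2 + \<omega> + inverse \<omega>"
    unfolding twisted
    by (rule conclude[OF dihedral_word_r[OF that rotation] coroots_basis(1)]) (simp add: gamma_ne_4)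
  show "dihedral_word (rs2 l \<circ> \<nu>2) (rs3 m \<circ> \<nu>3) (rs1 \<alpha> \<beta> \<circ> \<nu>1) k = id \<longleftrightarrow> splitting_relation t1 t2 t3"
    if "\<beta> = 2 + \<omega> + inverse \<omega>"
    unfolding twisted
    by (rule conclude[OF dihedral_word_q[OF that rotation] coroots_basis(5) l_plus_2_ne_0])
  show "dihedral_word (rs3 m \<circ> \<nu>3) (rs1 \<alpha> \<beta> \<circ> \<nu>1) (rs2 l \<circ> \<nu>2) k = id \<longleftrightarrow> splitting_relation t1 t2 t3"
    if "\<alpha> = 2 + \<omega> + inverse \<omega>"
    unfolding twisted
    by (rule conclude[OF dihedral_word_p[OF that rotation] coroots_basis(9) m_plus_2_ne_0])
qed

lemma section_image_reflection:
  assumes \<tau>: "\<tau> \<in> hom (Gstruct G Mod N) (Gstruct G)"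
    and sec: "\<forall>X \<in> carrier (Gstruct G Mod N). N #>\<^bsub>Gstruct G\<^esub> \<tau> X = X"
    and s: "reflection f a \<in> G" and f: "linear_form f" and "f a = 2" and "f b = 0"
  shows "\<exists>t. \<exists>\<nu>\<in>N. corresp b \<nu> (psc t (- f (e 2 1), - f (e 3 1)))
    \<and> \<tau> (N #>\<^bsub>Gstruct G\<^esub> reflection f a) = reflection f a \<circ> \<nu>"
proof -
  interpret normal N "Gstruct G"
    by (rule normal_Nsub)
  obtain \<nu> where "\<nu> \<in> N" and \<tau>_s: "\<tau> (N #>\<^bsub>Gstruct G\<^esub> reflection f a) = reflection f a \<circ> \<nu>"
    using section_rcoset_in_coset[OF \<tau> sec] s by (auto simp: Gstruct_def)
  have "(reflection f a \<circ> \<nu>) \<circ> (reflection f a \<circ> \<nu>)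
      = \<tau> (N #>\<^bsub>Gstruct G\<^esub> (reflection f a \<circ> reflection f a))"
    using hom_mult[OF section_rcoset_hom[OF \<tau>]] s \<tau>_s by (simp add: Gstruct_def)
  also have "\<dots> = id"
    using section_rcoset_of_mem[OF \<tau> id_mem_Nsub]
    by (simp add: reflection_involutive[OF f \<open>f a = 2\<close>] Gstruct_def)
  finally have involution: "(reflection f a \<circ> \<nu>) \<circ> (reflection f a \<circ> \<nu>) = id" .
  have "\<nu> \<in> G" and shift: "\<forall>x. \<exists>c. \<nu> x = x + c *s b"
    using \<open>\<nu> \<in> N\<close> by (simp_all add: mem_Nsub_iff)
  then obtain t where "\<nu> = (\<lambda>z. z - (t * f z) *s b)"
    using transvection_of_involution[OF f \<open>f a = 2\<close> \<open>f b = 0\<close> b_ne_0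
        linear_endo_Ggrp[OF \<open>\<nu> \<in> G\<close>] Ggrp_fixes_b[OF \<open>\<nu> \<in> G\<close>] _ involution] shift by blast
  then show ?thesis
    using \<open>\<nu> \<in> N\<close> \<tau>_s corresp_transvection[of f b, OF \<open>f b = 0\<close>] by blast
qed

lemma section_images_generators:
  assumes \<tau>: "\<tau> \<in> hom (Gstruct G Mod N) (Gstruct G)"
    and sec: "\<forall>X \<in> carrier (Gstruct G Mod N). N #>\<^bsub>Gstruct G\<^esub> \<tau> X = X"
  shows "\<exists>t. \<exists>\<nu>\<in>N. corresp b \<nu> (psc t (\<alpha>, \<beta>)) \<and> \<tau> (N #>\<^bsub>Gstruct G\<^esub> rs1 \<alpha> \<beta>) = rs1 \<alpha> \<beta> \<circ> \<nu>"
    and "\<exists>t. \<exists>\<nu>\<in>N. corresp b \<nu> (psc t (-2, l)) \<and> \<tau> (N #>\<^bsub>Gstruct G\<^esub> rs2 l) = rs2 l \<circ> \<nu>"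
    and "\<exists>t. \<exists>\<nu>\<in>N. corresp b \<nu> (psc t (m, -2)) \<and> \<tau> (N #>\<^bsub>Gstruct G\<^esub> rs3 m) = rs3 m \<circ> \<nu>"
  using section_image_reflection[OF \<tau> sec, of "coroot1 \<alpha> \<beta>" "e 1 1"]
    section_image_reflection[OF \<tau> sec, of "coroot2 l" "e 2 1"]
    section_image_reflection[OF \<tau> sec, of "coroot3 m" "e 3 1"] Ggrp_generators
  by (simp_all add: rs_eq_reflection linear_form_coroots)

lemma section_dihedral_word:
  assumes \<tau>: "\<tau> \<in> hom (Gstruct G Mod N) (Gstruct G)"
    and gens: "s \<in> G" "t \<in> G" "u \<in> G" and "dihedral_word s t u k \<in> N"
  shows "dihedral_word (\<tau> (N #>\<^bsub>Gstruct G\<^esub> s)) (\<tau> (N #>\<^bsub>Gstruct G\<^esub> t))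
    (\<tau> (N #>\<^bsub>Gstruct G\<^esub> u)) k = id"
proof -
  interpret normal N "Gstruct G"
    by (rule normal_Nsub)
  have "dihedral_word (\<tau> (N #>\<^bsub>Gstruct G\<^esub> s)) (\<tau> (N #>\<^bsub>Gstruct G\<^esub> t)) (\<tau> (N #>\<^bsub>Gstruct G\<^esub> u)) k
      = \<tau> (N #>\<^bsub>Gstruct G\<^esub> dihedral_word s t u k)"
    using hom_Gstruct_dihedral_word[OF section_rcoset_hom[OF \<tau>] gens] by simp
  also have "\<dots> = id"
    using section_rcoset_of_mem[OF \<tau> \<open>dihedral_word s t u k \<in> N\<close>] by (simp add: Gstruct_def)
  finally show ?thesis .
qed

lemma generators_dihedral_word_mem_Nsub:
  assumes rotation: "\<omega>^2 \<noteq> 1" "\<omega> ^ k = -1"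
  shows "\<gamma> = 2 + \<omega> + inverse \<omega> \<Longrightarrow> dihedral_word (rs1 \<alpha> \<beta>) (rs2 l) (rs3 m) k \<in> N"
    and "\<beta> = 2 + \<omega> + inverse \<omega> \<Longrightarrow> dihedral_word (rs2 l) (rs3 m) (rs1 \<alpha> \<beta>) k \<in> N"
    and "\<alpha> = 2 + \<omega> + inverse \<omega> \<Longrightarrow> dihedral_word (rs3 m) (rs1 \<alpha> \<beta>) (rs2 l) k \<in> N"
proof -
  have mem: "W \<in> N" if "W \<in> G" "W = (\<lambda>z. z + (c * h z) *s b)" for W c h
    using that by (auto simp: mem_Nsub_iff)
  show "dihedral_word (rs1 \<alpha> \<beta>) (rs2 l) (rs3 m) k \<in> N" if "\<gamma> = 2 + \<omega> + inverse \<omega>"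
    using dihedral_word_r[OF that rotation, of 0 0 0, unfolded twisted_rs_zero]
    by (intro mem Ggrp_dihedral_word Ggrp_generators)
  show "dihedral_word (rs2 l) (rs3 m) (rs1 \<alpha> \<beta>) k \<in> N" if "\<beta> = 2 + \<omega> + inverse \<omega>"
    using dihedral_word_q[OF that rotation, of 0 0 0, unfolded twisted_rs_zero]
    by (intro mem Ggrp_dihedral_word Ggrp_generators)
  show "dihedral_word (rs3 m) (rs1 \<alpha> \<beta>) (rs2 l) k \<in> N" if "\<alpha> = 2 + \<omega> + inverse \<omega>"
    using dihedral_word_p[OF that rotation, of 0 0 0, unfolded twisted_rs_zero]
    by (intro mem Ggrp_dihedral_word Ggrp_generators)
qed

end

section \<open>The splitting relation\<close>

locale reducible_reflection_rep =
  fixes p q r :: nat and k1 k2 k3 :: int and \<alpha> \<beta> \<gamma> l m :: complex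
  assumes p: "p \<ge> 3" and q: "q \<ge> 3" and r: "r \<ge> 3"
    and k1: "coprime k1 (int p)" and k2: "coprime k2 (int q)" and k3: "coprime k3 (int r)"
    and alpha: "\<alpha> = complex_of_real (4 * (cos (pi * real_of_int k1 / real p))^2)"
    and beta: "\<beta> = complex_of_real (4 * (cos (pi * real_of_int k2 / real q))^2)"
    and gamma: "\<gamma> = complex_of_real (4 * (cos (pi * real_of_int k3 / real r))^2)"
    and lm: "l * m = \<gamma>" and Delta: "8 - 2*\<alpha> - 2*\<beta> - 2*\<gamma> - (\<alpha> * l + \<beta> * m) = 0"

sublocale reducible_reflection_rep \<subseteq> reducible_cartan
  using lm Delta
    four_cos_sq_ne_four[OF p k1] four_cos_sq_ne_four[OF q k2] four_cos_sq_ne_four[OF r k3]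
  by unfold_locales (simp_all add: alpha beta gamma)

context reducible_reflection_rep
begin

lemma coxeter_relations_iff_splitting_relation:
  assumes "\<nu>1 \<in> N" "corresp b \<nu>1 (psc t1 (\<alpha>, \<beta>))" "\<nu>2 \<in> N" "corresp b \<nu>2 (psc t2 (-2, l))"
    "\<nu>3 \<in> N" "corresp b \<nu>3 (psc t3 (m, -2))"
  shows "r = 2 * r1 \<Longrightarrow>
      dihedral_word (rs1 \<alpha> \<beta> \<circ> \<nu>1) (rs2 l \<circ> \<nu>2) (rs3 m \<circ> \<nu>3) r1 = id \<longleftrightarrow> splitting_relation t1 t2 t3"
    and "q = 2 * q1 \<Longrightarrow>
      dihedral_word (rs2 l \<circ> \<nu>2) (rs3 m \<circ> \<nu>3) (rs1 \<alpha> \<beta> \<circ> \<nu>1) q1 = id \<longleftrightarrow> splitting_relation t1 t2 t3"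
    and "p = 2 * p1 \<Longrightarrow>
      dihedral_word (rs3 m \<circ> \<nu>3) (rs1 \<alpha> \<beta> \<circ> \<nu>1) (rs2 l \<circ> \<nu>2) p1 = id \<longleftrightarrow> splitting_relation t1 t2 t3"
  using four_cos_sq_half_turn[OF r k3, folded gamma] four_cos_sq_half_turn[OF q k2, folded beta]
    four_cos_sq_half_turn[OF p k1, folded alpha] twisted_dihedral_word_eq_id_iff[OF assms]
  by metis+

lemma splitting_relation_of_section:
  assumes "even (p * q * r)" and \<tau>: "\<tau> \<in> hom (Gstruct G Mod N) (Gstruct G)"
    and \<nu>: "\<nu>1 \<in> N" "corresp b \<nu>1 (psc t1 (\<alpha>, \<beta>))" "\<nu>2 \<in> N" "corresp b \<nu>2 (psc t2 (-2, l))"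
      "\<nu>3 \<in> N" "corresp b \<nu>3 (psc t3 (m, -2))"
    and \<tau>_s: "\<tau> (N #>\<^bsub>Gstruct G\<^esub> rs1 \<alpha> \<beta>) = rs1 \<alpha> \<beta> \<circ> \<nu>1"
      "\<tau> (N #>\<^bsub>Gstruct G\<^esub> rs2 l) = rs2 l \<circ> \<nu>2" "\<tau> (N #>\<^bsub>Gstruct G\<^esub> rs3 m) = rs3 m \<circ> \<nu>3"
  shows "splitting_relation t1 t2 t3"
proof -
  note iff = coxeter_relations_iff_splitting_relation[OF \<nu>]
  have "even r \<or> even q \<or> even p"
    using \<open>even (p * q * r)\<close> by auto
  then show ?thesis
  proof (elim disjE)
    assume "even r"
    then obtain h where "r = 2 * h"
      by (auto elim: evenE)
    moreover obtain \<omega> where "\<omega>^2 \<noteq> 1" "\<omega> ^ h = -1" "\<gamma> = 2 + \<omega> + inverse \<omega>"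
      using four_cos_sq_half_turn[OF r k3 \<open>r = 2 * h\<close>] gamma by auto
    ultimately show ?thesis
      using iff(1)
        section_dihedral_word[OF \<tau> Ggrp_generators(1,2,3) generators_dihedral_word_mem_Nsub(1)]
      unfolding \<tau>_s by blast
  next
    assume "even q"
    then obtain h where "q = 2 * h"
      by (auto elim: evenE)
    moreover obtain \<omega> where "\<omega>^2 \<noteq> 1" "\<omega> ^ h = -1" "\<beta> = 2 + \<omega> + inverse \<omega>"
      using four_cos_sq_half_turn[OF q k2 \<open>q = 2 * h\<close>] beta by auto
    ultimately show ?thesis
      using iff(2)
        section_dihedral_word[OF \<tau> Ggrp_generators(2,3,1) generators_dihedral_word_mem_Nsub(2)]
      unfolding \<tau>_s by blast
  next
    assume "even p"
    then obtain h where "p = 2 * h"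
      by (auto elim: evenE)
    moreover obtain \<omega> where "\<omega>^2 \<noteq> 1" "\<omega> ^ h = -1" "\<alpha> = 2 + \<omega> + inverse \<omega>"
      using four_cos_sq_half_turn[OF p k1 \<open>p = 2 * h\<close>] alpha by auto
    ultimately show ?thesis
      using iff(3)
        section_dihedral_word[OF \<tau> Ggrp_generators(3,1,2) generators_dihedral_word_mem_Nsub(3)]
      unfolding \<tau>_s by blast
  qed
qed

lemma splitting_implies_splitting_relation:
  assumes "even (p * q * r)"
    and \<tau>: "\<tau> \<in> hom (Gstruct G Mod N) (Gstruct G)"
    and sec: "\<forall>X \<in> carrier (Gstruct G Mod N). N #>\<^bsub>Gstruct G\<^esub> \<tau> X = X"
  shows "\<exists>t1 t2 t3 \<nu>1 \<nu>2 \<nu>3.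
    \<nu>1 \<in> N \<and> corresp b \<nu>1 (psc t1 (\<alpha>, \<beta>)) \<and>
    \<nu>2 \<in> N \<and> corresp b \<nu>2 (psc t2 (-2, l)) \<and>
    \<nu>3 \<in> N \<and> corresp b \<nu>3 (psc t3 (m, -2)) \<and>
    \<tau> (N #>\<^bsub>Gstruct G\<^esub> rs1 \<alpha> \<beta>) = rs1 \<alpha> \<beta> \<circ> \<nu>1 \<and>
    \<tau> (N #>\<^bsub>Gstruct G\<^esub> rs2 l) = rs2 l \<circ> \<nu>2 \<and>
    \<tau> (N #>\<^bsub>Gstruct G\<^esub> rs3 m) = rs3 m \<circ> \<nu>3 \<and>
    splitting_relation t1 t2 t3"
  using section_images_generators[OF \<tau> sec] splitting_relation_of_section[OF assms(1) \<tau>]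
  by metis

end

theorem theorem2:
  fixes p q r :: nat and k1 k2 k3 :: int and \<alpha> \<beta> \<gamma> l m :: complex
  assumes "p \<ge> 3" "q \<ge> 3" "r \<ge> 3"
    and "coprime k1 (int p)" "coprime k2 (int q)" "coprime k3 (int r)"
    and "\<alpha> = complex_of_real (4 * (cos (pi * real_of_int k1 / real p))^2)"
    and "\<beta> = complex_of_real (4 * (cos (pi * real_of_int k2 / real q))^2)"
    and "\<gamma> = complex_of_real (4 * (cos (pi * real_of_int k3 / real r))^2)"
    and "l * m = \<gamma>"
    and "8 - 2*\<alpha> - 2*\<beta> - 2*\<gamma> - (\<alpha> * l + \<beta> * m) = 0"
    and "even (p * q * r)"
  defines "G \<equiv> Ggrp \<alpha> \<beta> l m"
    and "N \<equiv> Nsub (Ggrp \<alpha> \<beta> l m)"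
    and "b \<equiv> e 1 (4 - \<gamma>) + e 2 (l + 2) + e 3 (m + 2)"
    and "c1 \<equiv> (\<alpha>, \<beta>)" and "c2 \<equiv> (-2, l)" and "c3 \<equiv> (m, -2)"
    and "s1 \<equiv> rs1 \<alpha> \<beta>" and "s2 \<equiv> rs2 l" and "s3 \<equiv> rs3 m"
  shows
    "(\<forall>t1 t2 t3 \<nu>1 \<nu>2 \<nu>3.
        \<nu>1 \<in> N \<and> corresp b \<nu>1 (psc t1 c1) \<and>
        \<nu>2 \<in> N \<and> corresp b \<nu>2 (psc t2 c2) \<and>
        \<nu>3 \<in> N \<and> corresp b \<nu>3 (psc t3 c3) \<longrightarrow>
        (let s1' = s1 \<circ> \<nu>1; s2' = s2 \<circ> \<nu>2; s3' = s3 \<circ> \<nu>3;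
             E = ((4 - \<gamma>) * t1 + (l + 2) * t2 + (m + 2) * t3 = -1) in
          (\<forall>r1. r = 2 * r1 \<longrightarrow> ((s1' \<circ> (s2' \<circ> s3') ^^ r1) ^^ 2 = id \<longleftrightarrow> E)) \<and>
          (\<forall>q1. q = 2 * q1 \<longrightarrow> ((s2' \<circ> (s3' \<circ> s1') ^^ q1) ^^ 2 = id \<longleftrightarrow> E)) \<and>
          (\<forall>p1. p = 2 * p1 \<longrightarrow> ((s3' \<circ> (s1' \<circ> s2') ^^ p1) ^^ 2 = id \<longleftrightarrow> E))))
     \<and>
     (\<forall>\<tau>. \<tau> \<in> hom (Gstruct G Mod N) (Gstruct G) \<and>
          (\<forall>X \<in> carrier (Gstruct G Mod N). N #>\<^bsub>Gstruct G\<^esub> \<tau> X = X) \<longrightarrow>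
        (\<exists>t1 t2 t3 \<nu>1 \<nu>2 \<nu>3.
           \<nu>1 \<in> N \<and> corresp b \<nu>1 (psc t1 c1) \<and>
           \<nu>2 \<in> N \<and> corresp b \<nu>2 (psc t2 c2) \<and>
           \<nu>3 \<in> N \<and> corresp b \<nu>3 (psc t3 c3) \<and>
           \<tau> (N #>\<^bsub>Gstruct G\<^esub> s1) = s1 \<circ> \<nu>1 \<and>
           \<tau> (N #>\<^bsub>Gstruct G\<^esub> s2) = s2 \<circ> \<nu>2 \<and>
           \<tau> (N #>\<^bsub>Gstruct G\<^esub> s3) = s3 \<circ> \<nu>3 \<and>
           (4 - \<gamma>) * t1 + (l + 2) * t2 + (m + 2) * t3 = -1))"
proof -
  interpret reducible_reflection_rep p q r k1 k2 k3 \<alpha> \<beta> \<gamma> l m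
    using assms(1-11) by unfold_locales
  show ?thesis
    unfolding G_def N_def b_def c1_def c2_def c3_def s1_def s2_def s3_def b_vector_def[symmetric]
      Let_def dihedral_word_def[symmetric]
    by (intro conjI allI impI; elim conjE;
        rule coxeter_relations_iff_splitting_relation
          splitting_implies_splitting_relation[OF assms(12)];
        assumption)
qed

end
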